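(* Let $n$ be a positive integer, $1\le k\le n$, $w\in\mathfrak S_n$, and $\rho\in\mathcal A_w(n,k)$. (a) The reversal set $\mathrm{Rev}_{n,k,w}(\rho)\subseteq\mathrm{Inv}_{k+1}(w)$ is a lower order ideal of $\mathcal P_w(n,k+1)$, and for every $X\in\mathrm{Inv}_{k+2}(w)$ its intersection with $P(X)$ is a prefix or a suffix of $P(X)$. (b) If $\sigma$ is a total order of $\mathrm{Inv}_k(w)$ with $\sigma\sim_w\rho$, then $\sigma\in\mathcal A_w(n,k)$ and $\mathrm{Rev}_{n,k,w}(\rho)=\mathrm{Rev}_{n,k,w}(\sigma)$. (c) If $\sigma$ is obtained from $\rho$ by a packet flip at $P(X)$ for some $X\in\mathrm{Inv}_{k+1}(w)$ whose packet is flippable in $\rho$, then $\sigma\in\mathcal A_w(n,k)$ and $\mathrm{Rev}_{n,k,w}(\sigma)\,\triangle\,\mathrm{Rev}_{n,k,w}(\rho)=\{X\}$, where $\triangle$ denotes symmetric difference.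
   Context: $\mathfrak S_n$ is the symmetric group on $[n]$. For $m\ge0$, $\binom{[n]}{m}$ is the set of $m$-element subsets of $[n]$, written $[x_1,\dots,x_m]$ with $x_1<\dots<x_m$. For $X=[x_1,\dots,x_m]$ and $i\in[m]$, $X_i$ is $X$ with $x_i$ removed; $P(X)=\{X_1,\dots,X_m\}$, with lex order $(X_m,\dots,X_1)$ and antilex order $(X_1,\dots,X_m)$. A prefix of $P(X)$ is a set $\{X_m,\dots,X_i\}$, a suffix is a set $\{X_i,\dots,X_1\}$ (the empty set counts as both). $\mathrm{Inv}_m(w)=\{[x_1,\dots,x_m]\in\binom{[n]}{m}: w^{-1}(x_1)>\dots>w^{-1}(x_m)\}$ (empty if $m>n$). $X\in\binom{[n]}{m}$ is an $m$-quasi-inversion of $w$ if exactly one pair $[x_a,x_b]$, $a<b$, is not in $\mathrm{Inv}_2(w)$. $\mathcal P_w(n,m)$ is $\mathrm{Inv}_m(w)$ with the reflexive-transitive closure of: whenever $X\in\binom{[n]}{m+1}$ is a quasi-inversion with $P(X)\cap\mathrm{Inv}_m(w)=\{X_i,X_{i+1}\}$, $X_i<X_{i+1}$ if $m-i$ is odd and $X_{i+1}<X_i$ if $m-i$ is even. $\mathcal A_w(n,k)$ is the set of total orders $\rho$ of $\mathrm{Inv}_k(w)$ that are linear extensions of $\mathcal P_w(n,k)$ and such that for each $X\in\mathrm{Inv}_{k+1}(w)$, $\rho|_{P(X)}$ is the lex or antilex order. $\mathrm{Rev}_{n,k,w}(\rho)=\{X\in\mathrm{Inv}_{k+1}(w):\rho|_{P(X)}=(X_1,\dots,X_{k+1})\}$.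 Two elements of $\mathrm{Inv}_k(w)$ commute if they are incomparable in $\mathcal P_w(n,k)$ and no $Z\in\binom{[n]}{k+1}$ has both in $P(Z)$; $\sim_w$ is the equivalence on total orders generated by swapping adjacent commuting elements. For $X\in\mathrm{Inv}_{k+1}(w)$, $P(X)$ is flippable in $\rho$ if its elements occupy consecutive positions of $\rho$; the packet flip at $P(X)$ reverses the order of that block (lex-to-antilex or antilex-to-lex). *)

theory Defs
  imports "HOL-Combinatorics.Permutations"
begin

text \<open>Subsets of [n] = {1..n} are represented as finite sets of naturals.
  Total orders of a finite set are represented as distinct lists enumerating it
  (earlier position = smaller).\<close>

definition binom :: "nat \<Rightarrow> nat \<Rightarrow> nat set set" where
  "binom n m = {X. X \<subseteq> {1..n} \<and> card X = m}"

text \<open>i-th smallest element (1-based) of X\<close>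
definition elem :: "nat set \<Rightarrow> nat \<Rightarrow> nat" where
  "elem X i = sorted_list_of_set X ! (i - 1)"

definition subs :: "nat set \<Rightarrow> nat \<Rightarrow> nat set" where
  "subs X i = X - {elem X i}"

definition packet :: "nat set \<Rightarrow> nat set set" where
  "packet X = subs X ` {1..card X}"

definition lex_list :: "nat set \<Rightarrow> nat set list" where
  "lex_list X = map (subs X) (rev [1..<card X + 1])"

definition antilex_list :: "nat set \<Rightarrow> nat set list" where
  "antilex_list X = map (subs X) [1..<card X + 1]"

text \<open>prefix {X_m,...,X_i} and suffix {X_i,...,X_1} of P(X) (empty set allowed)\<close>
definition is_prefix_packet :: "nat set \<Rightarrow> nat set set \<Rightarrow> bool" where
  "is_prefix_packet X S \<longleftrightarrow> (\<exists>i. 1 \<le> i \<and> i \<le> card X + 1 \<and> S = subs X ` {i..card X})"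

definition is_suffix_packet :: "nat set \<Rightarrow> nat set set \<Rightarrow> bool" where
  "is_suffix_packet X S \<longleftrightarrow> (\<exists>i. i \<le> card X \<and> S = subs X ` {1..i})"

definition Inv :: "(nat \<Rightarrow> nat) \<Rightarrow> nat \<Rightarrow> nat \<Rightarrow> nat set set" where
  "Inv w n m = {X \<in> binom n m. \<forall>x\<in>X. \<forall>y\<in>X. x < y \<longrightarrow> inv w y < inv w x}"

definition quasi_inv :: "(nat \<Rightarrow> nat) \<Rightarrow> nat set \<Rightarrow> bool" where
  "quasi_inv w X \<longleftrightarrow> card {(x, y). x \<in> X \<and> y \<in> X \<and> x < y \<and> \<not> inv w y < inv w x} = 1"

text \<open>generating covering relations of P_w(n,m); (A,B) means A < B\<close>
definition P_gen :: "(nat \<Rightarrow> nat) \<Rightarrow> nat \<Rightarrow> nat \<Rightarrow> (nat set \<times> nat set) set" where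
  "P_gen w n m = {(A, B). \<exists>X \<in> binom n (m + 1). quasi_inv w X \<and>
      (\<exists>i. 1 \<le> i \<and> i \<le> m \<and> packet X \<inter> Inv w n m = {subs X i, subs X (i + 1)} \<and>
        (if odd (m - i) then (A, B) = (subs X i, subs X (i + 1))
                        else (A, B) = (subs X (i + 1), subs X i)))}"

definition P_ord :: "(nat \<Rightarrow> nat) \<Rightarrow> nat \<Rightarrow> nat \<Rightarrow> (nat set \<times> nat set) set" where
  "P_ord w n m = {(A, B). A \<in> Inv w n m \<and> B \<in> Inv w n m \<and> (A, B) \<in> (P_gen w n m)\<^sup>*}"

definition total_order_of :: "nat set set \<Rightarrow> nat set list \<Rightarrow> bool" where
  "total_order_of S \<rho> \<longleftrightarrow> distinct \<rho> \<and> set \<rho> = S"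

definition precedes :: "nat set list \<Rightarrow> nat set \<Rightarrow> nat set \<Rightarrow> bool" where
  "precedes \<rho> A B \<longleftrightarrow> (\<exists>i j. i \<le> j \<and> j < length \<rho> \<and> \<rho> ! i = A \<and> \<rho> ! j = B)"

definition restrict_order :: "nat set list \<Rightarrow> nat set set \<Rightarrow> nat set list" where
  "restrict_order \<rho> S = filter (\<lambda>A. A \<in> S) \<rho>"

definition A_set :: "(nat \<Rightarrow> nat) \<Rightarrow> nat \<Rightarrow> nat \<Rightarrow> nat set list set" where
  "A_set w n k = {\<rho>. total_order_of (Inv w n k) \<rho>
      \<and> (\<forall>(A, B) \<in> P_ord w n k. precedes \<rho> A B)
      \<and> (\<forall>X \<in> Inv w n (k + 1). restrict_order \<rho> (packet X) = lex_list X
                              \<or> restrict_order \<rho> (packet X) = antilex_list X)}"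

definition Rev :: "nat \<Rightarrow> nat \<Rightarrow> (nat \<Rightarrow> nat) \<Rightarrow> nat set list \<Rightarrow> nat set set" where
  "Rev n k w \<rho> = {X \<in> Inv w n (k + 1). restrict_order \<rho> (packet X) = antilex_list X}"

definition commute :: "(nat \<Rightarrow> nat) \<Rightarrow> nat \<Rightarrow> nat \<Rightarrow> nat set \<Rightarrow> nat set \<Rightarrow> bool" where
  "commute w n k A B \<longleftrightarrow> A \<in> Inv w n k \<and> B \<in> Inv w n k
     \<and> (A, B) \<notin> P_ord w n k \<and> (B, A) \<notin> P_ord w n k
     \<and> \<not> (\<exists>Z \<in> binom n (k + 1). A \<in> packet Z \<and> B \<in> packet Z)"

definition comm_swap :: "(nat \<Rightarrow> nat) \<Rightarrow> nat \<Rightarrow> nat \<Rightarrow> (nat set list \<times> nat set list) set" where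
  "comm_swap w n k = {(\<rho>, \<sigma>). \<exists>xs A B ys. commute w n k A B
       \<and> \<rho> = xs @ [A, B] @ ys \<and> \<sigma> = xs @ [B, A] @ ys}"

definition comm_equiv :: "(nat \<Rightarrow> nat) \<Rightarrow> nat \<Rightarrow> nat \<Rightarrow> nat set list \<Rightarrow> nat set list \<Rightarrow> bool" where
  "comm_equiv w n k \<sigma> \<rho> \<longleftrightarrow> (\<sigma>, \<rho>) \<in> (comm_swap w n k \<union> (comm_swap w n k)\<inverse>)\<^sup>*"

end

theory Submission
  imports Defs
begin

text \<open>
  An admissible order \<open>\<rho>\<close> restricts to the lex or the antilex order on every packet \<open>P(X)\<close>,
  \<open>X \<in> Inv\<^sub>k\<^sub>+\<^sub>1(w)\<close>; so for \<open>x < y\<close> in \<open>X\<close> it puts \<open>X - {x}\<close> before \<open>X - {y}\<close> exactly when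
  \<open>X\<close> is reversed. For \<open>x < y < z\<close> in a \<open>(k + 2)\<close>-set \<open>Z\<close>, the sets \<open>Z - {x, y}\<close>, \<open>Z - {x, z}\<close>,
  \<open>Z - {y, z}\<close> lie pairwise in the packets of \<open>Z - {x}\<close>, \<open>Z - {y}\<close>, \<open>Z - {z}\<close>, and transitivity
  of \<open>\<rho>\<close> on them forces \<open>Z - {y}\<close> to be reversed if \<open>Z - {x}\<close> and \<open>Z - {z}\<close> both are, and not
  reversed if neither is; hence \<open>Rev \<inter> P(Z)\<close> is a prefix or a suffix of \<open>P(Z)\<close>. The same
  argument, for a quasi-inversion \<open>Z\<close> with non-inverted pair \<open>p < q\<close> and a third element \<open>c\<close>,
  with the covering relation of \<open>P\<^sub>w(n, k)\<close> between \<open>Z - {c, p}\<close> and \<open>Z - {c, q}\<close> in place of one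
  packet, shows that \<open>Rev\<close> is closed downwards under the covering relations of \<open>P\<^sub>w(n, k + 1)\<close>.

  Commuting swaps and packet flips reverse a block of \<open>\<rho>\<close> containing no two comparable elements
  of \<open>P\<^sub>w(n, k)\<close>. For a flippable packet \<open>P(X)\<close>, a chain of covering steps between two of its
  elements would begin with a step inside the block, i.e. inside \<open>P(X)\<close> and the packet of a
  quasi-inversion, but distinct packets share at most one element. For the same reason a flip at
  \<open>P(X)\<close> changes the restriction of \<open>\<rho>\<close> to \<open>P(X)\<close> only.
\<close>

section \<open>Strict precedence in a list\<close>

definition before :: "'a list \<Rightarrow> 'a \<Rightarrow> 'a \<Rightarrow> bool" where
  "before xs a b \<longleftrightarrow> (\<exists>i j. i < j \<and> j < length xs \<and> xs ! i = a \<and> xs ! j = b)"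

lemma before_irrefl: "distinct xs \<Longrightarrow> \<not> before xs a a"
  unfolding before_def by (auto simp: nth_eq_iff_index_eq)

lemma before_memD: "before xs a b \<Longrightarrow> a \<in> set xs \<and> b \<in> set xs"
  unfolding before_def by auto

lemma before_trans:
  assumes "distinct xs" "before xs a b" "before xs b c"
  shows "before xs a c"
proof -
  obtain i j i' j' where "i < j" "j < length xs" "xs ! i = a" "xs ! j = b"
    "i' < j'" "j' < length xs" "xs ! i' = b" "xs ! j' = c"
    using assms(2,3) unfolding before_def by blast
  moreover from calculation have "j = i'"
    using assms(1) nth_eq_iff_index_eq by (metis order.strict_trans)
  ultimately show ?thesis unfolding before_def by (metis order.strict_trans)
qed

lemma before_asym: "distinct xs \<Longrightarrow> before xs a b \<Longrightarrow> \<not> before xs b a"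
  using before_trans before_irrefl by metis

lemma not_before_iff:
  assumes "distinct xs" "a \<in> set xs" "b \<in> set xs" "a \<noteq> b"
  shows "\<not> before xs a b \<longleftrightarrow> before xs b a"
proof -
  have "before xs a b \<or> before xs b a"
    using assms(2-4) unfolding before_def by (metis in_set_conv_nth linorder_neqE_nat)
  then show ?thesis using before_asym[OF assms(1)] by blast
qed

lemma before_coherent:
  assumes "distinct xs" "a \<in> set xs" "b \<in> set xs" "c \<in> set xs" "a \<noteq> b" "b \<noteq> c" "a \<noteq> c"
    and "before xs a b = before xs b c"
  shows "before xs a c = before xs a b"
  using assms before_trans[OF assms(1)] not_before_iff[OF assms(1)] by metis

lemma before_nth:
  "i < j \<Longrightarrow> j < length xs \<Longrightarrow> before xs (xs ! i) (xs ! j)"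
  unfolding before_def by blast

lemma before_append:
  "before (xs @ ys) a b \<longleftrightarrow> before xs a b \<or> before ys a b \<or> (a \<in> set xs \<and> b \<in> set ys)"
proof
  assume "before (xs @ ys) a b"
  then obtain i j where ij: "i < j" "j < length (xs @ ys)" "(xs @ ys) ! i = a" "(xs @ ys) ! j = b"
    unfolding before_def by blast
  consider "j < length xs" | "i < length xs" "\<not> j < length xs" | "\<not> i < length xs"
    using ij(1) by linarith
  then show "before xs a b \<or> before ys a b \<or> (a \<in> set xs \<and> b \<in> set ys)"
  proof cases
    case 1
    then have "before xs a b" using ij before_nth[of i j xs] by (simp add: nth_append)
    then show ?thesis by blast
  next
    case 2
    then have "a \<in> set xs" "b \<in> set ys" using ij by (auto simp: nth_append)
    then show ?thesis by blast
  next
    case 3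
    then have "before ys a b"
      using ij before_nth[of "i - length xs" "j - length xs" ys] by (simp add: nth_append)
    then show ?thesis by blast
  qed
next
  assume "before xs a b \<or> before ys a b \<or> (a \<in> set xs \<and> b \<in> set ys)"
  then show "before (xs @ ys) a b"
  proof (elim disjE conjE)
    assume "before xs a b"
    then obtain i j where "i < j" "j < length xs" "xs ! i = a" "xs ! j = b"
      unfolding before_def by blast
    then show ?thesis using before_nth[of i j "xs @ ys"] by (simp add: nth_append)
  next
    assume "before ys a b"
    then obtain i j where "i < j" "j < length ys" "ys ! i = a" "ys ! j = b"
      unfolding before_def by blast
    then show ?thesis
      using before_nth[of "length xs + i" "length xs + j" "xs @ ys"] by (simp add: nth_append)
  next
    assume "a \<in> set xs" "b \<in> set ys"
    then obtain i j where "i < length xs" "xs ! i = a" "j < length ys" "ys ! j = b"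
      by (auto simp: in_set_conv_nth)
    then show ?thesis
      using before_nth[of i "length xs + j" "xs @ ys"] by (simp add: nth_append)
  qed
qed

lemma before_rev: "before (rev xs) a b \<longleftrightarrow> before xs b a"
proof -
  have "before xs b a" if rev_before: "before (rev xs) a b" for xs :: "'a list" and a b
  proof -
    obtain i j where "i < j" "j < length xs" "rev xs ! i = a" "rev xs ! j = b"
      using rev_before unfolding before_def length_rev by blast
    then have "xs ! (length xs - 1 - j) = b" "xs ! (length xs - 1 - i) = a"
      by (simp_all add: rev_nth)
    moreover have "length xs - 1 - j < length xs - 1 - i" "length xs - 1 - i < length xs"
      using \<open>i < j\<close> \<open>j < length xs\<close> by linarith+
    ultimately show ?thesis using before_nth[of "length xs - 1 - j" "length xs - 1 - i" xs] by simp
  qed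
  from this[of xs a b] this[of "rev xs" b a] show ?thesis
    unfolding rev_rev_ident by blast
qed

lemma precedes_iff_before: "precedes xs a b \<longleftrightarrow> (a = b \<and> a \<in> set xs) \<or> before xs a b"
proof
  assume "precedes xs a b"
  then obtain i j where "i \<le> j" "j < length xs" "xs ! i = a" "xs ! j = b"
    unfolding precedes_def by blast
  then show "(a = b \<and> a \<in> set xs) \<or> before xs a b"
    using before_nth[of i j xs] by (cases "i = j") auto
next
  assume "(a = b \<and> a \<in> set xs) \<or> before xs a b"
  then show "precedes xs a b"
  proof
    assume "a = b \<and> a \<in> set xs"
    then obtain i where "i < length xs" "xs ! i = a" "xs ! i = b"
      by (auto simp: in_set_conv_nth)
    then show ?thesis unfolding precedes_def by blast
  next
    assume "before xs a b"
    then show ?thesis unfolding before_def precedes_def by (blast intro: less_imp_le)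
  qed
qed

lemma sorted_wrt_before: "sorted_wrt (before xs) xs"
  unfolding sorted_wrt_iff_nth_less by (simp add: before_nth)

lemma distinct_rev_eq_iff: "distinct xs \<Longrightarrow> rev xs = xs \<longleftrightarrow> length xs \<le> 1"
proof
  assume "distinct xs" "rev xs = xs"
  show "length xs \<le> 1"
  proof (rule ccontr)
    assume long: "\<not> length xs \<le> 1"
    then have "xs \<noteq> []" by auto
    then have "xs ! 0 = xs ! (length xs - 1)"
      using \<open>rev xs = xs\<close> rev_nth[of 0 xs] by simp
    then show False
      using \<open>distinct xs\<close> \<open>xs \<noteq> []\<close> long nth_eq_iff_index_eq[of xs 0 "length xs - 1"]
      by simp
  qed
next
  assume "length xs \<le> 1"
  then show "rev xs = xs" by (cases xs) auto
qed

lemma rev_eq_if_subsingleton: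
  assumes "distinct xs" "\<And>a b. a \<in> set xs \<Longrightarrow> b \<in> set xs \<Longrightarrow> a = b"
  shows "rev xs = xs"
  using assms distinct_card[of xs] card_le_Suc0_iff_eq[of "set xs"]
  by (simp add: distinct_rev_eq_iff)

section \<open>Ranks in finite linearly ordered sets\<close>

definition rank :: "'a::linorder set \<Rightarrow> 'a \<Rightarrow> nat" where
  "rank X x = card {y \<in> X. y < x}"

lemma rank_nth_sorted_list_of_set:
  assumes "finite X" "t < card X"
  shows "rank X (sorted_list_of_set X ! t) = t"
proof -
  let ?L = "sorted_list_of_set X"
  have less_iff: "?L ! s < ?L ! t \<longleftrightarrow> s < t" if "s < card X" for s
  proof
    show "s < t \<Longrightarrow> ?L ! s < ?L ! t"
      using sorted_wrt_nth_less[OF strict_sorted_list_of_set] assms by simp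
  next
    assume "?L ! s < ?L ! t"
    show "s < t"
    proof (rule ccontr)
      assume "\<not> s < t"
      then have "?L ! t \<le> ?L ! s"
        using sorted_nth_mono[OF sorted_sorted_list_of_set, of t s] that by simp
      then show False using \<open>?L ! s < ?L ! t\<close> by simp
    qed
  qed
  have "{y \<in> set ?L. y < ?L ! t} = (!) ?L ` {..<t}"
  proof
    show "{y \<in> set ?L. y < ?L ! t} \<subseteq> (!) ?L ` {..<t}"
      using less_iff by (auto simp: in_set_conv_nth)
    show "(!) ?L ` {..<t} \<subseteq> {y \<in> set ?L. y < ?L ! t}"
      using less_iff assms(2) by auto
  qed
  then have "{y \<in> X. y < ?L ! t} = (!) ?L ` {..<t}"
    using assms(1) by simp
  moreover have "inj_on ((!) ?L) {..<t}"
    using assms by (intro inj_on_nth) auto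
  ultimately show ?thesis unfolding rank_def by (simp add: card_image)
qed

lemma elem_mem: "finite X \<Longrightarrow> 1 \<le> j \<Longrightarrow> j \<le> card X \<Longrightarrow> elem X j \<in> X"
  unfolding elem_def by (metis Suc_le_eq Suc_pred' diff_less le_trans less_one not_le nth_mem
      length_sorted_list_of_set set_sorted_list_of_set)

lemma rank_elem: "finite X \<Longrightarrow> 1 \<le> j \<Longrightarrow> j \<le> card X \<Longrightarrow> rank X (elem X j) = j - 1"
  unfolding elem_def by (simp add: rank_nth_sorted_list_of_set)

lemma nth_rank_sorted_list_of_set:
  assumes "finite X" "x \<in> X"
  shows "sorted_list_of_set X ! rank X x = x"
proof -
  obtain t where "t < card X" "sorted_list_of_set X ! t = x"
    using assms by (metis in_set_conv_nth length_sorted_list_of_set set_sorted_list_of_set)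
  then show ?thesis using rank_nth_sorted_list_of_set[OF assms(1)] by auto
qed

lemma elem_rank: "finite X \<Longrightarrow> x \<in> X \<Longrightarrow> elem X (rank X x + 1) = x"
  unfolding elem_def by (simp add: nth_rank_sorted_list_of_set)

lemma rank_less_card: "finite X \<Longrightarrow> x \<in> X \<Longrightarrow> rank X x < card X"
  unfolding rank_def by (intro psubset_card_mono) auto

lemma rank_less_rank_iff:
  assumes "finite X" "x \<in> X" "y \<in> X"
  shows "rank X x < rank X y \<longleftrightarrow> x < y"
proof -
  have "rank X x < rank X y" if "x < y" "x \<in> X" "y \<in> X" for x y
    unfolding rank_def using assms(1) that by (intro psubset_card_mono) auto
  then show ?thesis using assms by (metis less_asym linorder_neqE)
qed

lemma image_elem:
  assumes "finite X" "J \<subseteq> {1..card X}"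
  shows "elem X ` J = {x \<in> X. rank X x + 1 \<in> J}"
proof
  show "elem X ` J \<subseteq> {x \<in> X. rank X x + 1 \<in> J}"
    using assms elem_mem rank_elem by fastforce
  show "{x \<in> X. rank X x + 1 \<in> J} \<subseteq> elem X ` J"
    using elem_rank[OF assms(1)] by (metis (no_types, lifting) image_eqI mem_Collect_eq subsetI)
qed

lemma rank_adjacent:
  assumes "finite X" "p \<in> X" "p < q" "\<forall>c\<in>X. \<not> (p < c \<and> c < q)"
  shows "rank X q = rank X p + 1"
proof -
  have "{y \<in> X. y < q} = insert p {y \<in> X. y < p}"
    using assms(2-4) by (auto simp: not_less_iff_gr_or_eq)
  then show ?thesis unfolding rank_def using assms(1) by simp
qed

lemma elem_adjacent:
  assumes "finite X" "1 \<le> i" "i < card X"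
  shows "elem X i < elem X (i + 1)" "\<forall>c\<in>X. \<not> (elem X i < c \<and> c < elem X (i + 1))"
proof -
  have elems: "elem X i \<in> X" "elem X (i + 1) \<in> X"
    "rank X (elem X i) = i - 1" "rank X (elem X (i + 1)) = i"
    using elem_mem[OF assms(1)] rank_elem[OF assms(1)] assms(2,3) by auto
  then show "elem X i < elem X (i + 1)"
    using rank_less_rank_iff[OF assms(1) elems(1,2)] assms(2) by simp
  show "\<forall>c\<in>X. \<not> (elem X i < c \<and> c < elem X (i + 1))"
  proof (intro ballI notI)
    fix c assume "c \<in> X" "elem X i < c \<and> c < elem X (i + 1)"
    then have "i - 1 < rank X c" "rank X c < i"
      using rank_less_rank_iff[OF assms(1)] elems by metis+
    then show False by simp
  qed
qed

lemma rank_Diff_singleton: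
  assumes "finite X" "c \<in> X"
  shows "rank (X - {c}) x = (if c < x then rank X x - 1 else rank X x)"
proof -
  have "{y \<in> X - {c}. y < x} = {y \<in> X. y < x} - {c}" by auto
  then show ?thesis unfolding rank_def using assms by (simp add: card_Diff_singleton_if)
qed

section \<open>Packets\<close>

lemma subs_image: "subs X ` J = (\<lambda>x. X - {x}) ` elem X ` J"
  unfolding subs_def by (simp add: image_image)

lemma packet_eq:
  assumes "finite X"
  shows "packet X = (\<lambda>x. X - {x}) ` X"
proof -
  have "elem X ` {1..card X} = X"
    using image_elem[OF assms, of "{1..card X}"] rank_less_card[OF assms] by (auto simp: Suc_le_eq)
  then show ?thesis unfolding packet_def subs_image by simp
qed

lemma packet_inter_subsingleton:
  assumes "finite X" "finite Y" "X \<noteq> Y"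
    and "A \<in> packet X \<inter> packet Y" "B \<in> packet X \<inter> packet Y"
  shows "A = B"
proof (rule ccontr)
  assume "A \<noteq> B"
  have "A \<in> (\<lambda>x. X - {x}) ` X" "B \<in> (\<lambda>x. X - {x}) ` X"
    "A \<in> (\<lambda>y. Y - {y}) ` Y" "B \<in> (\<lambda>y. Y - {y}) ` Y"
    using assms by (simp_all add: packet_eq)
  then obtain a a' b b' where "A = X - {a}" "B = X - {a'}" "A = Y - {b}" "B = Y - {b'}"
    "a \<in> X" "a' \<in> X" "b \<in> Y" "b' \<in> Y"
    by blast
  with \<open>A \<noteq> B\<close> have "X = A \<union> B" "Y = A \<union> B" by auto
  with \<open>X \<noteq> Y\<close> show False by simp
qed

lemma antilex_list_eq: "antilex_list X = map (\<lambda>x. X - {x}) (sorted_list_of_set X)"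
proof -
  let ?L = "sorted_list_of_set X"
  have "map (\<lambda>j. ?L ! (j - 1)) [1..<card X + 1] = map ((!) ?L) [0..<length ?L]"
    by (simp add: map_Suc_upt[symmetric] comp_def del: upt_Suc)
  also have "\<dots> = ?L" by (rule map_nth)
  finally have "map (\<lambda>j. ?L ! (j - 1)) [1..<card X + 1] = ?L" .
  moreover have "antilex_list X = map (\<lambda>x. X - {x}) (map (\<lambda>j. ?L ! (j - 1)) [1..<card X + 1])"
    unfolding antilex_list_def subs_def elem_def by simp
  ultimately show ?thesis by simp
qed

lemma lex_list_eq_rev: "lex_list X = rev (antilex_list X)"
  unfolding lex_list_def antilex_list_def by (simp add: rev_map)

lemma lex_list_neq_antilex_list:
  assumes "finite X" "2 \<le> card X"
  shows "lex_list X \<noteq> antilex_list X"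
proof -
  have "inj_on (\<lambda>x. X - {x}) X" by (auto simp: inj_on_def)
  then have "distinct (antilex_list X)"
    using assms(1) by (simp add: antilex_list_eq distinct_map)
  moreover have "length (antilex_list X) = card X" unfolding antilex_list_def by simp
  ultimately show ?thesis using assms(2) by (simp add: lex_list_eq_rev distinct_rev_eq_iff)
qed

lemma upward_or_downward_closed:
  fixes Z :: "'a::linorder set"
  assumes "R \<subseteq> Z"
    and between: "\<And>x y z. x \<in> Z \<Longrightarrow> y \<in> Z \<Longrightarrow> z \<in> Z \<Longrightarrow> x < y \<Longrightarrow> y < z \<Longrightarrow>
      (x \<in> R \<longleftrightarrow> z \<in> R) \<Longrightarrow> (y \<in> R \<longleftrightarrow> x \<in> R)"
  shows "(\<forall>a\<in>R. \<forall>b\<in>Z. a < b \<longrightarrow> b \<in> R) \<or> (\<forall>a\<in>R. \<forall>b\<in>Z. b < a \<longrightarrow> b \<in> R)"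
proof (rule ccontr)
  assume "\<not> ?thesis"
  then obtain a b c d where "a \<in> R" "b \<in> Z" "b \<notin> R" "a < b" "d \<in> R" "c \<in> Z" "c \<notin> R" "c < d"
    by blast
  moreover have "b < d \<or> d < b"
    using \<open>b \<notin> R\<close> \<open>d \<in> R\<close> by (metis linorder_neqE)
  ultimately show False
    using \<open>R \<subseteq> Z\<close> between[of a b d] between[of c d b] by blast
qed

lemma is_prefix_packet_if_upward_closed:
  assumes "finite X" "R \<subseteq> X" "\<forall>a\<in>R. \<forall>b\<in>X. a < b \<longrightarrow> b \<in> R"
  shows "is_prefix_packet X ((\<lambda>a. X - {a}) ` R)"
proof (cases "R = {}")
  case True
  then show ?thesis unfolding is_prefix_packet_def by (intro exI[of _ "card X + 1"]) simp
next
  case False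
  define r where "r = Min R"
  have r: "r \<in> R" "\<forall>a\<in>R. r \<le> a"
    using False finite_subset[OF assms(2,1)] unfolding r_def by auto
  then have rX: "r \<in> X" using assms(2) by blast
  have "elem X ` {rank X r + 1..card X} = {x \<in> X. rank X r + 1 \<le> rank X x + 1}"
    using image_elem[OF assms(1), of "{rank X r + 1..card X}"] rank_less_card[OF assms(1)]
    by (auto simp: Suc_le_eq)
  also have "\<dots> = {x \<in> X. r \<le> x}"
    using rank_less_rank_iff[OF assms(1) _ rX] by (auto simp: not_less[symmetric])
  also have "\<dots> = R"
    using r assms(2,3) by (auto simp: le_less)
  finally show ?thesis
    using rank_less_card[OF assms(1) rX] unfolding is_prefix_packet_def subs_image
    by (intro exI[of _ "rank X r + 1"]) simp
qed

lemma is_suffix_packet_if_downward_closed: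
  assumes "finite X" "R \<subseteq> X" "\<forall>a\<in>R. \<forall>b\<in>X. b < a \<longrightarrow> b \<in> R"
  shows "is_suffix_packet X ((\<lambda>a. X - {a}) ` R)"
proof (cases "R = {}")
  case True
  then show ?thesis unfolding is_suffix_packet_def by (intro exI[of _ 0]) simp
next
  case False
  define r where "r = Max R"
  have r: "r \<in> R" "\<forall>a\<in>R. a \<le> r"
    using False finite_subset[OF assms(2,1)] unfolding r_def by auto
  then have rX: "r \<in> X" using assms(2) by blast
  have "elem X ` {1..rank X r + 1} = {x \<in> X. rank X x \<le> rank X r}"
    using image_elem[OF assms(1), of "{1..rank X r + 1}"] rank_less_card[OF assms(1) rX]
    by auto
  also have "\<dots> = {x \<in> X. x \<le> r}"
    using rank_less_rank_iff[OF assms(1) rX] by (auto simp: not_less[symmetric])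
  also have "\<dots> = R"
    using r assms(2,3) by (auto simp: le_less)
  finally show ?thesis
    using rank_less_card[OF assms(1) rX] unfolding is_suffix_packet_def subs_image
    by (intro exI[of _ "rank X r + 1"]) simp
qed

section \<open>Inversion sets and the covering relations of \<open>P\<^sub>w(n, m)\<close>\<close>

lemma binomD:
  assumes "X \<in> binom n m"
  shows "finite X" "card X = m" "X \<subseteq> {1..n}"
  using assms finite_subset[of X "{1..n}"] unfolding binom_def by auto

lemma Inv_subset_binom: "Inv w n m \<subseteq> binom n m"
  unfolding Inv_def by blast

lemma InvD:
  assumes "X \<in> Inv w n m"
  shows "finite X" "card X = m"
  using assms Inv_subset_binom binomD by blast+

lemma Inv_Diff_singleton:
  assumes "X \<in> Inv w n m" "x \<in> X"
  shows "X - {x} \<in> Inv w n (m - 1)"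
proof -
  have "finite X" "card X = m" "X \<subseteq> {1..n}"
    using assms(1) Inv_subset_binom binomD by blast+
  then have "X - {x} \<in> binom n (m - 1)"
    using assms(2) unfolding binom_def by auto
  moreover have "\<forall>a\<in>X - {x}. \<forall>b\<in>X - {x}. a < b \<longrightarrow> inv w b < inv w a"
    using assms(1) unfolding Inv_def by blast
  ultimately show ?thesis unfolding Inv_def by blast
qed

lemma non_inverted_pair_eq:
  assumes "X - {p} \<in> Inv w n m" "X - {q} \<in> Inv w n m" "p < q"
    and "x \<in> X" "y \<in> X" "x < y" "\<not> inv w y < inv w x"
  shows "x = p \<and> y = q"
proof -
  have "x = p \<or> y = p" "x = q \<or> y = q"
    using assms unfolding Inv_def by blast+
  then show ?thesis using assms(3,6) by auto
qed

lemma quasi_inv_not_inverted: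
  assumes "quasi_inv w X" "X - {p} \<in> Inv w n m" "X - {q} \<in> Inv w n m" "p < q"
  shows "\<not> inv w q < inv w p"
proof -
  have "{(x, y). x \<in> X \<and> y \<in> X \<and> x < y \<and> \<not> inv w y < inv w x} \<noteq> {}"
    using assms(1) unfolding quasi_inv_def by (metis card.empty zero_neq_one)
  then obtain x y where "x \<in> X" "y \<in> X" "x < y" "\<not> inv w y < inv w x"
    by blast
  then show ?thesis using non_inverted_pair_eq[OF assms(2-4)] by blast
qed

text \<open>\<open>X\<close> is an \<open>(m + 1)\<close>-quasi-inversion whose only non-inverted pair \<open>p < q\<close> is adjacent in \<open>X\<close>,
  say \<open>p = x\<^sub>i\<close>, \<open>q = x\<^sub>i\<^sub>+\<^sub>1\<close>; equivalently \<open>P(X) \<inter> Inv\<^sub>m(w) = {X\<^sub>i, X\<^sub>i\<^sub>+\<^sub>1}\<close>.\<close>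
definition adjacent_quasi_inversion ::
    "(nat \<Rightarrow> nat) \<Rightarrow> nat \<Rightarrow> nat \<Rightarrow> nat set \<Rightarrow> nat \<Rightarrow> nat \<Rightarrow> bool" where
  "adjacent_quasi_inversion w n m X p q \<longleftrightarrow>
     X \<in> binom n (m + 1) \<and> p \<in> X \<and> q \<in> X \<and> p < q \<and> (\<forall>c\<in>X. \<not> (p < c \<and> c < q))
     \<and> X - {p} \<in> Inv w n m \<and> X - {q} \<in> Inv w n m \<and> \<not> inv w q < inv w p"

lemma P_genI:
  assumes "adjacent_quasi_inversion w n m X p q"
  shows "(if odd (m - rank X q) then (X - {p}, X - {q}) else (X - {q}, X - {p})) \<in> P_gen w n m"
proof -
  note adj = assms[unfolded adjacent_quasi_inversion_def]
  have X: "finite X" "card X = m + 1" using adj binomD by blast+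
  define i where "i = rank X q"
  have i: "i = rank X p + 1" "1 \<le> i" "i \<le> m"
    using rank_adjacent[OF X(1)] rank_less_card[OF X(1), of q] adj X(2) unfolding i_def by auto
  have "elem X i = p" "elem X (i + 1) = q"
    using elem_rank[OF X(1), of p] elem_rank[OF X(1), of q] adj i(1) unfolding i_def by simp_all
  then have subs: "subs X i = X - {p}" "subs X (i + 1) = X - {q}"
    unfolding subs_def by simp_all
  have "{(x, y). x \<in> X \<and> y \<in> X \<and> x < y \<and> \<not> inv w y < inv w x} = {(p, q)}"
    using adj non_inverted_pair_eq[of X p w n m q] by auto
  then have quasi: "quasi_inv w X" unfolding quasi_inv_def by simp
  have "X - {c} \<notin> Inv w n m" if "c \<in> X" "c \<noteq> p" "c \<noteq> q" for c
    using that adj unfolding Inv_def by blast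
  then have packet: "packet X \<inter> Inv w n m = {subs X i, subs X (i + 1)}"
    using adj subs X(1) by (auto simp: packet_eq)
  have "(subs X i, subs X (i + 1)) \<in> P_gen w n m" if "odd (m - i)"
    unfolding P_gen_def mem_Collect_eq case_prod_conv using adj quasi packet i(2,3) that
    by (intro bexI[of _ X] conjI exI[of _ i]) simp_all
  moreover have "(subs X (i + 1), subs X i) \<in> P_gen w n m" if "even (m - i)"
    unfolding P_gen_def mem_Collect_eq case_prod_conv using adj quasi packet i(2,3) that
    by (intro bexI[of _ X] conjI exI[of _ i]) simp_all
  ultimately show ?thesis using subs unfolding i_def by simp
qed

lemma P_genE:
  assumes "(A, B) \<in> P_gen w n m"
  obtains X p q where "adjacent_quasi_inversion w n m X p q"
    "(A, B) = (if odd (m - rank X q) then (X - {p}, X - {q}) else (X - {q}, X - {p}))"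
proof -
  obtain X i where X: "X \<in> binom n (m + 1)" "quasi_inv w X" "1 \<le> i" "i \<le> m"
    and packet: "packet X \<inter> Inv w n m = {subs X i, subs X (i + 1)}"
    and AB: "if odd (m - i) then (A, B) = (subs X i, subs X (i + 1))
             else (A, B) = (subs X (i + 1), subs X i)"
    using assms unfolding P_gen_def mem_Collect_eq case_prod_conv by (elim bexE exE conjE) simp
  have fin: "finite X" "card X = m + 1" using binomD[OF X(1)] by auto
  define p where "p = elem X i"
  define q where "q = elem X (i + 1)"
  have pq: "p \<in> X" "q \<in> X" "rank X q = i"
    using elem_mem[OF fin(1)] rank_elem[OF fin(1)] X(3,4) fin(2) unfolding p_def q_def by auto
  have adjacent: "p < q" "\<forall>c\<in>X. \<not> (p < c \<and> c < q)"
    using elem_adjacent[OF fin(1) X(3)] X(4) fin(2) unfolding p_def q_def by auto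
  have subs: "subs X i = X - {p}" "subs X (i + 1) = X - {q}"
    unfolding subs_def p_def q_def by simp_all
  have Inv: "X - {p} \<in> Inv w n m" "X - {q} \<in> Inv w n m"
    using packet subs by blast+
  then have "adjacent_quasi_inversion w n m X p q"
    unfolding adjacent_quasi_inversion_def
    using X(1) pq(1,2) adjacent quasi_inv_not_inverted[OF X(2) Inv adjacent(1)] by blast
  moreover have "(A, B) = (if odd (m - rank X q) then (X - {p}, X - {q}) else (X - {q}, X - {p}))"
    using AB subs pq(3) by simp
  ultimately show ?thesis by (rule that)
qed

lemma adjacent_quasi_inversion_not_Inv:
  assumes "adjacent_quasi_inversion w n m X p q"
  shows "X \<notin> Inv w n (m + 1)"
  using assms unfolding adjacent_quasi_inversion_def Inv_def mem_Collect_eq by metis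

lemma adjacent_quasi_inversion_Diff:
  assumes "adjacent_quasi_inversion w n (m + 1) Z p q" "c \<in> Z" "c \<noteq> p" "c \<noteq> q"
  shows "adjacent_quasi_inversion w n m (Z - {c}) p q"
proof -
  note adj = assms(1)[unfolded adjacent_quasi_inversion_def]
  have "Z \<in> binom n (m + 2)" using adj by simp
  note Z = binomD[OF this]
  have "Z - {c} \<in> binom n (m + 1)"
    using Z assms(2) unfolding binom_def by auto
  moreover have "Z - {c} - {p} = Z - {p} - {c}" "Z - {c} - {q} = Z - {q} - {c}" by blast+
  then have "Z - {c} - {p} \<in> Inv w n m" "Z - {c} - {q} \<in> Inv w n m"
    using adj assms(2-4) Inv_Diff_singleton[of "Z - {p}" w n "m + 1" c]
      Inv_Diff_singleton[of "Z - {q}" w n "m + 1" c] by simp_all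
  ultimately show ?thesis using adj assms(3,4) unfolding adjacent_quasi_inversion_def by simp
qed

section \<open>Admissible orders and their reversal sets\<close>

lemma A_setD:
  assumes "\<rho> \<in> A_set w n k"
  shows "distinct \<rho>" "set \<rho> = Inv w n k"
    and "(A, B) \<in> P_ord w n k \<Longrightarrow> precedes \<rho> A B"
    and "X \<in> Inv w n (k + 1) \<Longrightarrow>
      restrict_order \<rho> (packet X) = lex_list X \<or> restrict_order \<rho> (packet X) = antilex_list X"
  using assms unfolding A_set_def total_order_of_def by auto

lemma before_if_P_gen:
  assumes "\<rho> \<in> A_set w n k" "(A, B) \<in> P_gen w n k"
  shows "before \<rho> A B"
proof -
  obtain X p q where adj: "adjacent_quasi_inversion w n k X p q"
    and AB: "(A, B) = (if odd (k - rank X q) then (X - {p}, X - {q}) else (X - {q}, X - {p}))"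
    using P_genE[OF assms(2)] by blast
  have "A \<in> Inv w n k" "B \<in> Inv w n k" "A \<noteq> B"
    using adj AB unfolding adjacent_quasi_inversion_def by (auto split: if_splits)
  then have "(A, B) \<in> P_ord w n k" "A \<noteq> B"
    using assms(2) unfolding P_ord_def by auto
  then show ?thesis using A_setD(3)[OF assms(1)] precedes_iff_before by blast
qed

lemma sorted_wrt_sorted_list_of_setD:
  assumes "sorted_wrt P (sorted_list_of_set X)" "finite X" "a \<in> X" "b \<in> X" "a < b"
  shows "P a b"
proof -
  have "rank X a < rank X b" "rank X b < length (sorted_list_of_set X)"
    using rank_less_rank_iff[OF assms(2-4)] rank_less_card[OF assms(2,4)] assms(5) by simp_all
  then show ?thesis
    using sorted_wrt_nth_less[OF assms(1)] nth_rank_sorted_list_of_set[OF assms(2)] assms(3,4)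
    by metis
qed

lemma before_packet_iff:
  assumes \<rho>: "\<rho> \<in> A_set w n k" and X: "X \<in> Inv w n (k + 1)"
    and xy: "x \<in> X" "y \<in> X" "x \<noteq> y"
  shows "before \<rho> (X - {x}) (X - {y}) \<longleftrightarrow> (x < y \<longleftrightarrow> X \<in> Rev n k w \<rho>)"
proof -
  let ?f = "\<lambda>x. X - {x}" and ?L = "sorted_list_of_set X"
  have fin: "finite X" using InvD(1)[OF X] .
  have sorted: "sorted_wrt (before \<rho>) (restrict_order \<rho> (packet X))"
    unfolding restrict_order_def by (rule sorted_wrt_filter[OF sorted_wrt_before])
  have increasing: "before \<rho> (?f a) (?f b) \<longleftrightarrow> X \<in> Rev n k w \<rho>"
    if ab: "a \<in> X" "b \<in> X" "a < b" for a b
  proof (cases "X \<in> Rev n k w \<rho>")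
    case True
    then have "restrict_order \<rho> (packet X) = map ?f ?L"
      unfolding Rev_def by (simp add: antilex_list_eq)
    then have "sorted_wrt (\<lambda>a b. before \<rho> (?f a) (?f b)) ?L"
      using sorted by (simp add: sorted_wrt_map)
    then show ?thesis using True sorted_wrt_sorted_list_of_setD[OF _ fin ab] by blast
  next
    case False
    then have "restrict_order \<rho> (packet X) = rev (map ?f ?L)"
      using A_setD(4)[OF \<rho> X] X unfolding Rev_def by (auto simp: lex_list_eq_rev antilex_list_eq)
    then have "sorted_wrt (\<lambda>a b. before \<rho> (?f b) (?f a)) ?L"
      using sorted by (simp add: sorted_wrt_map sorted_wrt_rev)
    then have "before \<rho> (?f b) (?f a)" using sorted_wrt_sorted_list_of_setD[OF _ fin ab] by blast
    then show ?thesis using False before_asym[OF A_setD(1)[OF \<rho>]] by blast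
  qed
  have "?f x \<in> set \<rho>" "?f y \<in> set \<rho>" "?f x \<noteq> ?f y"
    using Inv_Diff_singleton[OF X] xy A_setD(2)[OF \<rho>] by auto
  then have "before \<rho> (?f x) (?f y) \<longleftrightarrow> \<not> before \<rho> (?f y) (?f x)"
    using not_before_iff[OF A_setD(1)[OF \<rho>]] by blast
  then show ?thesis using increasing[of x y] increasing[of y x] xy by (cases "x < y") auto
qed

lemma Rev_packet_between:
  assumes \<rho>: "\<rho> \<in> A_set w n k" and Z: "Z \<in> Inv w n (k + 2)"
    and xyz: "x \<in> Z" "y \<in> Z" "z \<in> Z" "x < y" "y < z"
    and "Z - {x} \<in> Rev n k w \<rho> \<longleftrightarrow> Z - {z} \<in> Rev n k w \<rho>"
  shows "Z - {y} \<in> Rev n k w \<rho> \<longleftrightarrow> Z - {x} \<in> Rev n k w \<rho>"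
proof -
  have face: "Z - {a} \<in> Inv w n (k + 1)" if "a \<in> Z" for a
    using Inv_Diff_singleton[OF Z that] by simp
  have ridge: "Z - {a} - {b} \<in> set \<rho>" if "a \<in> Z" "b \<in> Z" "a \<noteq> b" for a b
    using Inv_Diff_singleton[OF face[OF that(1)], of b] that A_setD(2)[OF \<rho>] by simp
  define u v s where "u = Z - {x} - {y}" and "v = Z - {x} - {z}" and "s = Z - {y} - {z}"
  have uvs: "u \<in> set \<rho>" "v \<in> set \<rho>" "s \<in> set \<rho>" "u \<noteq> v" "v \<noteq> s" "u \<noteq> s"
    unfolding u_def v_def s_def using ridge xyz by auto
  have "before \<rho> u v \<longleftrightarrow> Z - {x} \<in> Rev n k w \<rho>"
    using before_packet_iff[OF \<rho> face, of x y z] xyz unfolding u_def v_def by simp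
  moreover have "before \<rho> u s \<longleftrightarrow> Z - {y} \<in> Rev n k w \<rho>"
    using before_packet_iff[OF \<rho> face, of y x z] xyz unfolding u_def s_def
    by (simp add: Diff_insert2[symmetric] insert_commute)
  moreover have "before \<rho> v s \<longleftrightarrow> Z - {z} \<in> Rev n k w \<rho>"
    using before_packet_iff[OF \<rho> face, of z x y] xyz unfolding v_def s_def
    by (simp add: Diff_insert2[symmetric] insert_commute)
  ultimately show ?thesis
    using before_coherent[OF A_setD(1)[OF \<rho>] uvs] assms(8) by blast
qed

lemma Rev_inter_packet_prefix_or_suffix:
  assumes \<rho>: "\<rho> \<in> A_set w n k" and Z: "Z \<in> Inv w n (k + 2)"
  shows "is_prefix_packet Z (Rev n k w \<rho> \<inter> packet Z) \<or> is_suffix_packet Z (Rev n k w \<rho> \<inter> packet Z)"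
proof -
  define R where "R = {a \<in> Z. Z - {a} \<in> Rev n k w \<rho>}"
  have fin: "finite Z" using InvD(1)[OF Z] .
  have R: "R \<subseteq> Z" "Rev n k w \<rho> \<inter> packet Z = (\<lambda>a. Z - {a}) ` R"
    unfolding R_def packet_eq[OF fin] by blast+
  have "(\<forall>a\<in>R. \<forall>b\<in>Z. a < b \<longrightarrow> b \<in> R) \<or> (\<forall>a\<in>R. \<forall>b\<in>Z. b < a \<longrightarrow> b \<in> R)"
    using R(1) by (rule upward_or_downward_closed) (use Rev_packet_between[OF \<rho> Z] in \<open>auto simp: R_def\<close>)
  then show ?thesis
    using is_prefix_packet_if_upward_closed[OF fin R(1)] is_suffix_packet_if_downward_closed[OF fin R(1)]
    unfolding R(2) by blast
qed

text \<open>The covering relation of \<open>P\<^sub>w(n, k)\<close> induced by the face \<open>Z - {c}\<close> points the same way as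
  that of \<open>P\<^sub>w(n, k + 1)\<close> induced by \<open>Z\<close> iff \<open>c\<close> lies below \<open>p\<close> and \<open>q\<close>.\<close>
lemma before_face_iff:
  assumes \<rho>: "\<rho> \<in> A_set w n k" and adj: "adjacent_quasi_inversion w n (k + 1) Z p q"
    and c: "c \<in> Z" "c \<noteq> p" "c \<noteq> q"
  shows "before \<rho> (Z - {c} - {p}) (Z - {c} - {q}) \<longleftrightarrow> (c < q \<longleftrightarrow> odd (k + 1 - rank Z q))"
proof -
  note Z = adj[unfolded adjacent_quasi_inversion_def]
  have fin: "finite Z" "card Z = k + 2" using Z binomD by auto
  have face: "adjacent_quasi_inversion w n k (Z - {c}) p q"
    using adjacent_quasi_inversion_Diff[OF adj c] .
  have "rank Z q = rank Z p + 1"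
    using rank_adjacent[OF fin(1)] Z by blast
  moreover have "rank Z q < k + 1" if "\<not> c < q"
    using that c Z rank_less_rank_iff[OF fin(1), of q c] rank_less_card[OF fin(1) c(1)] fin(2)
    by simp
  ultimately have "odd (k - rank (Z - {c}) q) \<longleftrightarrow> (c < q \<longleftrightarrow> odd (k + 1 - rank Z q))"
    using rank_Diff_singleton[OF fin(1) c(1)] by (cases "c < q") (auto simp: Suc_diff_le)
  moreover have "before \<rho> (Z - {c} - {p}) (Z - {c} - {q}) \<longleftrightarrow> odd (k - rank (Z - {c}) q)"
  proof (cases "odd (k - rank (Z - {c}) q)")
    case True
    then have "(Z - {c} - {p}, Z - {c} - {q}) \<in> P_gen w n k" using P_genI[OF face] by simp
    then show ?thesis using True before_if_P_gen[OF \<rho>] by blast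
  next
    case False
    then have "(Z - {c} - {q}, Z - {c} - {p}) \<in> P_gen w n k" using P_genI[OF face] by simp
    then show ?thesis using False before_if_P_gen[OF \<rho>] before_asym[OF A_setD(1)[OF \<rho>]] by blast
  qed
  ultimately show ?thesis by simp
qed

lemma Rev_downward_closed_P_gen:
  assumes \<rho>: "\<rho> \<in> A_set w n k" and "1 \<le> k"
    and AB: "(A, B) \<in> P_gen w n (k + 1)" and B: "B \<in> Rev n k w \<rho>"
  shows "A \<in> Rev n k w \<rho>"
proof -
  obtain Z p q where adj: "adjacent_quasi_inversion w n (k + 1) Z p q"
    and AB: "(A, B) = (if odd (k + 1 - rank Z q) then (Z - {p}, Z - {q}) else (Z - {q}, Z - {p}))"
    using P_genE[OF AB] by blast
  note Z = adj[unfolded adjacent_quasi_inversion_def]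
  have fin: "finite Z" "card Z = k + 2" using Z binomD by auto
  obtain c where c: "c \<in> Z" "c \<noteq> p" "c \<noteq> q"
  proof -
    have "card (Z - {p, q}) = k" using fin Z by (simp add: card_Diff_subset)
    then have "Z - {p, q} \<noteq> {}" using \<open>1 \<le> k\<close> by (metis card.empty not_one_le_zero)
    then show ?thesis using that by blast
  qed
  have "c < p \<longleftrightarrow> c < q" using Z c by auto
  moreover have "before \<rho> (Z - {p} - {c}) (Z - {p} - {q}) \<longleftrightarrow> (c < q \<longleftrightarrow> Z - {p} \<in> Rev n k w \<rho>)"
    using before_packet_iff[OF \<rho>, of "Z - {p}" c q] Z c by simp
  moreover have "before \<rho> (Z - {q} - {c}) (Z - {q} - {p}) \<longleftrightarrow> (c < p \<longleftrightarrow> Z - {q} \<in> Rev n k w \<rho>)"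
    using before_packet_iff[OF \<rho>, of "Z - {q}" c p] Z c by simp
  moreover have "before \<rho> (Z - {p} - {c}) (Z - {q} - {c}) \<longleftrightarrow> (c < q \<longleftrightarrow> odd (k + 1 - rank Z q))"
    using before_face_iff[OF \<rho> adj c] by (simp add: Diff_insert2[symmetric] insert_commute)
  moreover have "Z - {p} - {c} \<in> set \<rho>" "Z - {p} - {q} \<in> set \<rho>" "Z - {q} - {c} \<in> set \<rho>"
    using Inv_Diff_singleton[of "Z - {p}" w n "k + 1"] Inv_Diff_singleton[of "Z - {q}" w n "k + 1"]
      A_setD(2)[OF \<rho>] Z c by auto
  moreover have "Z - {q} - {p} = Z - {p} - {q}" by blast
  \<comment> \<open>If \<open>A\<close> were not reversed, \<open>\<rho>\<close> would order \<open>Z - {p, c}\<close>, \<open>Z - {p, q}\<close>, \<open>Z - {q, c}\<close> cyclically.\<close>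
  ultimately show ?thesis
    using before_coherent[OF A_setD(1)[OF \<rho>], of "Z - {p} - {c}" "Z - {p} - {q}" "Z - {q} - {c}"]
      not_before_iff[OF A_setD(1)[OF \<rho>], of "Z - {q} - {c}" "Z - {p} - {q}"] AB B Z c
    by (auto split: if_splits)
qed

lemma Rev_downward_closed:
  assumes \<rho>: "\<rho> \<in> A_set w n k" and "1 \<le> k"
    and "(A, B) \<in> P_ord w n (k + 1)" and "B \<in> Rev n k w \<rho>"
  shows "A \<in> Rev n k w \<rho>"
proof -
  have "(A, B) \<in> (P_gen w n (k + 1))\<^sup>*" using assms(3) unfolding P_ord_def by simp
  then show ?thesis using assms(4)
    by (induction rule: converse_rtrancl_induct) (auto intro: Rev_downward_closed_P_gen[OF \<rho> \<open>1 \<le> k\<close>])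
qed

section \<open>Commuting swaps and packet flips\<close>

lemma before_reverse_block:
  "\<not> (a \<in> set m \<and> b \<in> set m) \<Longrightarrow> before (xs @ rev m @ ys) a b \<longleftrightarrow> before (xs @ m @ ys) a b"
  by (auto simp: before_append before_rev dest: before_memD)

lemma A_set_reverse_block:
  assumes \<rho>: "\<rho> \<in> A_set w n k" and \<rho>_eq: "\<rho> = xs @ m @ ys"
    and unrelated: "\<And>C D. C \<in> set m \<Longrightarrow> D \<in> set m \<Longrightarrow> C \<noteq> D \<Longrightarrow> (C, D) \<notin> P_ord w n k"
    and packets: "\<And>X. X \<in> Inv w n (k + 1) \<Longrightarrow>
      restrict_order (xs @ rev m @ ys) (packet X) = restrict_order \<rho> (packet X) \<or>
      restrict_order (xs @ rev m @ ys) (packet X) = rev (restrict_order \<rho> (packet X))"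
  shows "xs @ rev m @ ys \<in> A_set w n k"
proof -
  let ?\<sigma> = "xs @ rev m @ ys"
  have total: "total_order_of (Inv w n k) ?\<sigma>"
    using A_setD(1,2)[OF \<rho>] \<rho>_eq unfolding total_order_of_def by auto
  have "precedes ?\<sigma> C D" if CD: "(C, D) \<in> P_ord w n k" for C D
  proof (cases "C = D")
    case True
    have "C \<in> Inv w n k" using CD unfolding P_ord_def by auto
    then show ?thesis using True total unfolding precedes_iff_before total_order_of_def by simp
  next
    case False
    then have "before \<rho> C D" using A_setD(3)[OF \<rho> CD] precedes_iff_before by blast
    moreover have "\<not> (C \<in> set m \<and> D \<in> set m)" using unrelated False CD by blast
    ultimately have "before ?\<sigma> C D" using before_reverse_block[of C m D xs ys] \<rho>_eq by simp
    then show ?thesis using precedes_iff_before by blast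
  qed
  moreover have "restrict_order ?\<sigma> (packet X) = lex_list X \<or> restrict_order ?\<sigma> (packet X) = antilex_list X"
    if "X \<in> Inv w n (k + 1)" for X
    using A_setD(4)[OF \<rho> that] packets[OF that] lex_list_eq_rev[of X] by (metis rev_rev_ident)
  ultimately show ?thesis using total unfolding A_set_def by blast
qed

lemma A_set_swap_commuting:
  assumes \<rho>: "\<rho> \<in> A_set w n k" and ab: "commute w n k a b" and \<rho>_eq: "\<rho> = xs @ [a, b] @ ys"
  shows "xs @ [b, a] @ ys \<in> A_set w n k \<and> Rev n k w (xs @ [b, a] @ ys) = Rev n k w \<rho>"
proof -
  have same: "restrict_order (xs @ [b, a] @ ys) (packet X) = restrict_order \<rho> (packet X)"
    if "X \<in> Inv w n (k + 1)" for X
  proof -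
    have "\<not> (a \<in> packet X \<and> b \<in> packet X)"
      using that ab Inv_subset_binom unfolding commute_def by blast
    then show ?thesis using \<rho>_eq unfolding restrict_order_def by auto
  qed
  have "xs @ rev [a, b] @ ys \<in> A_set w n k"
    using A_set_reverse_block[OF \<rho> \<rho>_eq] ab same unfolding commute_def by auto
  moreover have "Rev n k w (xs @ [b, a] @ ys) = Rev n k w \<rho>"
    unfolding Rev_def using same by auto
  ultimately show ?thesis by simp
qed

lemma A_set_comm_swap:
  assumes "\<rho> \<in> A_set w n k" "(\<rho>, \<sigma>) \<in> comm_swap w n k \<union> (comm_swap w n k)\<inverse>"
  shows "\<sigma> \<in> A_set w n k \<and> Rev n k w \<sigma> = Rev n k w \<rho>"
proof -
  from assms(2) consider "(\<rho>, \<sigma>) \<in> comm_swap w n k" | "(\<sigma>, \<rho>) \<in> comm_swap w n k" by blast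
  then show ?thesis
  proof cases
    case 1
    then obtain xs a b ys where "commute w n k a b" "\<rho> = xs @ [a, b] @ ys" "\<sigma> = xs @ [b, a] @ ys"
      unfolding comm_swap_def by blast
    then show ?thesis using A_set_swap_commuting[OF assms(1)] by simp
  next
    case 2
    then obtain xs a b ys where "commute w n k a b" "\<sigma> = xs @ [a, b] @ ys" "\<rho> = xs @ [b, a] @ ys"
      unfolding comm_swap_def by blast
    moreover from \<open>commute w n k a b\<close> have "commute w n k b a"
      unfolding commute_def by blast
    ultimately show ?thesis using A_set_swap_commuting[OF assms(1), of b a xs ys] by auto
  qed
qed

lemma A_set_comm_equiv:
  assumes "\<rho> \<in> A_set w n k" "comm_equiv w n k \<sigma> \<rho>"
  shows "\<sigma> \<in> A_set w n k \<and> Rev n k w \<sigma> = Rev n k w \<rho>"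
proof -
  have "(\<sigma>, \<rho>) \<in> (comm_swap w n k \<union> (comm_swap w n k)\<inverse>)\<^sup>*"
    using assms(2) unfolding comm_equiv_def .
  then show ?thesis
  proof (induction rule: converse_rtrancl_induct)
    case base
    then show ?case using assms(1) by simp
  next
    case (step \<tau> \<tau>')
    then have "(\<tau>', \<tau>) \<in> comm_swap w n k \<union> (comm_swap w n k)\<inverse>" by blast
    then show ?case using step.IH A_set_comm_swap[of \<tau>' w n k \<tau>] by simp
  qed
qed

lemma mem_block_if_between:
  assumes "distinct (xs @ ys @ zs)" "C \<in> set ys" "D \<in> set ys"
    and "before (xs @ ys @ zs) C E" "precedes (xs @ ys @ zs) E D"
  shows "E \<in> set ys"
proof -
  have "E \<notin> set xs"
  proof
    assume "E \<in> set xs"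
    then have "before (xs @ ys @ zs) E C" using assms(2) by (simp add: before_append)
    then show False using before_asym[OF assms(1,4)] by blast
  qed
  moreover have "E \<notin> set zs"
  proof
    assume "E \<in> set zs"
    then have "before (xs @ ys @ zs) D E" "E \<noteq> D" using assms(1,3) by (auto simp: before_append)
    then show False using assms(5) before_asym[OF assms(1)] precedes_iff_before by blast
  qed
  ultimately show ?thesis using before_memD[OF assms(4)] by auto
qed

lemma packet_block_unrelated:
  assumes \<rho>: "\<rho> \<in> A_set w n k" and X: "X \<in> Inv w n (k + 1)"
    and \<rho>_eq: "\<rho> = xs @ ys @ zs" and ys: "set ys = packet X"
    and CD: "C \<in> set ys" "D \<in> set ys" "C \<noteq> D"
  shows "(C, D) \<notin> P_ord w n k"
proof
  assume "(C, D) \<in> P_ord w n k"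
  then obtain E where CE: "(C, E) \<in> P_gen w n k" and ED: "(E, D) \<in> (P_gen w n k)\<^sup>*"
    and "D \<in> Inv w n k"
    using CD(3) unfolding P_ord_def by (auto elim: converse_rtranclE)
  obtain Y p q where adj: "adjacent_quasi_inversion w n k Y p q"
    and CE_eq: "(C, E) = (if odd (k - rank Y q) then (Y - {p}, Y - {q}) else (Y - {q}, Y - {p}))"
    using P_genE[OF CE] by blast
  have Y: "finite Y" "C \<in> packet Y" "E \<in> packet Y" "E \<in> Inv w n k"
    using adj CE_eq binomD(1) unfolding adjacent_quasi_inversion_def
    by (auto simp: packet_eq split: if_splits)
  have "before \<rho> C E" using before_if_P_gen[OF \<rho> CE] .
  moreover have "precedes \<rho> E D"
    using A_setD(3)[OF \<rho>] ED Y(4) \<open>D \<in> Inv w n k\<close> unfolding P_ord_def by blast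
  ultimately have "E \<in> packet X"
    using mem_block_if_between[of xs ys zs C D E] A_setD(1)[OF \<rho>] \<rho>_eq CD ys by blast
  moreover have "C \<noteq> E" using before_irrefl[OF A_setD(1)[OF \<rho>]] \<open>before \<rho> C E\<close> by blast
  moreover have "finite X" using InvD(1)[OF X] .
  ultimately have "X = Y"
    using packet_inter_subsingleton[of X Y C E] Y CD ys by blast
  then show False using X adjacent_quasi_inversion_not_Inv[OF adj] by simp
qed

lemma restrict_order_packet_flip:
  assumes "distinct (xs @ ys @ zs)" "set ys = packet X" "finite X" "finite Y"
  shows "restrict_order (xs @ rev ys @ zs) (packet Y) =
    (if Y = X then rev (restrict_order (xs @ ys @ zs) (packet Y)) else restrict_order (xs @ ys @ zs) (packet Y))"
proof (cases "Y = X")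
  case True
  have "filter (\<lambda>A. A \<in> packet X) xs = []" "filter (\<lambda>A. A \<in> packet X) zs = []"
    "filter (\<lambda>A. A \<in> packet X) ys = ys"
    using assms(1,2) by (auto simp: filter_empty_conv)
  then show ?thesis using True unfolding restrict_order_def by (simp add: rev_filter[symmetric])
next
  case False
  have "rev (restrict_order ys (packet Y)) = restrict_order ys (packet Y)"
    using assms packet_inter_subsingleton[OF assms(3,4) False[symmetric]]
    by (intro rev_eq_if_subsingleton) (auto simp: restrict_order_def)
  then show ?thesis using False unfolding restrict_order_def by (simp add: rev_filter[symmetric])
qed

lemma A_set_packet_flip:
  assumes \<rho>: "\<rho> \<in> A_set w n k" and X: "X \<in> Inv w n (k + 1)"
    and \<rho>_eq: "\<rho> = xs @ ys @ zs" and ys: "set ys = packet X"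
  shows "xs @ rev ys @ zs \<in> A_set w n k"
proof (rule A_set_reverse_block[OF \<rho> \<rho>_eq])
  show "(C, D) \<notin> P_ord w n k" if "C \<in> set ys" "D \<in> set ys" "C \<noteq> D" for C D
    using packet_block_unrelated[OF \<rho> X \<rho>_eq ys that] .
  show "restrict_order (xs @ rev ys @ zs) (packet Y) = restrict_order \<rho> (packet Y) \<or>
      restrict_order (xs @ rev ys @ zs) (packet Y) = rev (restrict_order \<rho> (packet Y))"
    if "Y \<in> Inv w n (k + 1)" for Y
    using restrict_order_packet_flip[of xs ys zs X Y] A_setD(1)[OF \<rho>] \<rho>_eq ys InvD(1) X that
    by simp
qed

lemma Rev_packet_flip:
  assumes \<rho>: "\<rho> \<in> A_set w n k" and "1 \<le> k" and X: "X \<in> Inv w n (k + 1)"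
    and \<rho>_eq: "\<rho> = xs @ ys @ zs" and ys: "set ys = packet X"
  shows "(Rev n k w (xs @ rev ys @ zs) - Rev n k w \<rho>) \<union> (Rev n k w \<rho> - Rev n k w (xs @ rev ys @ zs)) = {X}"
proof -
  let ?\<sigma> = "xs @ rev ys @ zs"
  have flip: "restrict_order ?\<sigma> (packet Y) =
    (if Y = X then rev (restrict_order \<rho> (packet Y)) else restrict_order \<rho> (packet Y))"
    if "Y \<in> Inv w n (k + 1)" for Y
    using restrict_order_packet_flip[of xs ys zs X Y] A_setD(1)[OF \<rho>] \<rho>_eq ys InvD(1) X that
    by simp
  have "lex_list X \<noteq> antilex_list X"
    using lex_list_neq_antilex_list InvD[OF X] \<open>1 \<le> k\<close> by simp
  then have "X \<in> Rev n k w ?\<sigma> \<longleftrightarrow> X \<notin> Rev n k w \<rho>"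
    using A_setD(4)[OF \<rho> X] flip[OF X] X lex_list_eq_rev[of X] unfolding Rev_def by auto
  moreover have "Y \<in> Rev n k w ?\<sigma> \<longleftrightarrow> Y \<in> Rev n k w \<rho>" if "Y \<noteq> X" for Y
    using flip[of Y] that unfolding Rev_def by (cases "Y \<in> Inv w n (k + 1)") simp_all
  ultimately show ?thesis by blast
qed

theorem lemma3p8:
  fixes n k :: nat and w :: "nat \<Rightarrow> nat" and \<rho> :: "nat set list"
  assumes "0 < n" and "1 \<le> k" and "k \<le> n"
    and "w permutes {1..n}"
    and "\<rho> \<in> A_set w n k"
  shows "(Rev n k w \<rho> \<subseteq> Inv w n (k + 1)
          \<and> (\<forall>A B. (A, B) \<in> P_ord w n (k + 1) \<and> B \<in> Rev n k w \<rho> \<longrightarrow> A \<in> Rev n k w \<rho>)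
          \<and> (\<forall>X \<in> Inv w n (k + 2).
               is_prefix_packet X (Rev n k w \<rho> \<inter> packet X)
             \<or> is_suffix_packet X (Rev n k w \<rho> \<inter> packet X)))
       \<and> (\<forall>\<sigma>. total_order_of (Inv w n k) \<sigma> \<and> comm_equiv w n k \<sigma> \<rho> \<longrightarrow>
            \<sigma> \<in> A_set w n k \<and> Rev n k w \<rho> = Rev n k w \<sigma>)
       \<and> (\<forall>X \<in> Inv w n (k + 1). \<forall>xs ys zs.
            \<rho> = xs @ ys @ zs \<and> set ys = packet X \<longrightarrow>
            (let \<sigma> = xs @ rev ys @ zs in
              \<sigma> \<in> A_set w n k
              \<and> (Rev n k w \<sigma> - Rev n k w \<rho>) \<union> (Rev n k w \<rho> - Rev n k w \<sigma>) = {X}))"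
proof -
  \<comment> \<open>Only \<open>inv w\<close> as a ranking of \<open>[n]\<close> enters.\<close>
  note \<rho> = \<open>\<rho> \<in> A_set w n k\<close>
  have "Rev n k w \<rho> \<subseteq> Inv w n (k + 1)" unfolding Rev_def by blast
  moreover have "\<forall>A B. (A, B) \<in> P_ord w n (k + 1) \<and> B \<in> Rev n k w \<rho> \<longrightarrow> A \<in> Rev n k w \<rho>"
    using Rev_downward_closed[OF \<rho> \<open>1 \<le> k\<close>] by blast
  moreover have "\<forall>X \<in> Inv w n (k + 2).
      is_prefix_packet X (Rev n k w \<rho> \<inter> packet X) \<or> is_suffix_packet X (Rev n k w \<rho> \<inter> packet X)"
    using Rev_inter_packet_prefix_or_suffix[OF \<rho>] by blast
  moreover have "\<forall>\<sigma>. total_order_of (Inv w n k) \<sigma> \<and> comm_equiv w n k \<sigma> \<rho> \<longrightarrow>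
      \<sigma> \<in> A_set w n k \<and> Rev n k w \<rho> = Rev n k w \<sigma>"
    using A_set_comm_equiv[OF \<rho>] by metis
  moreover have "\<forall>X \<in> Inv w n (k + 1). \<forall>xs ys zs. \<rho> = xs @ ys @ zs \<and> set ys = packet X \<longrightarrow>
      (let \<sigma> = xs @ rev ys @ zs in \<sigma> \<in> A_set w n k
        \<and> (Rev n k w \<sigma> - Rev n k w \<rho>) \<union> (Rev n k w \<rho> - Rev n k w \<sigma>) = {X})"
    unfolding Let_def using A_set_packet_flip[OF \<rho>] Rev_packet_flip[OF \<rho> \<open>1 \<le> k\<close>] by blast
  ultimately show ?thesis by blast
qed

end
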